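(* Let $S\subset\mathbf{P}^4_{\mathbb{Q}}$ be a smooth quadric surface such that the double covering $\pi:O\to\mathbf{P}^4_{\mathbb{Q}}$ splits over $S$, $S$ is tangent to the five coordinate hyperplanes $H_0,\ldots,H_4$, and for each $i$ the point of tangency of $S$ with $H_i$ is contained in one of the three lines on $H_i\cap R$. Write $P^{(0)}=(0:x_1^{(0)}:x_2^{(0)}:x_3^{(0)}:x_4^{(0)})$ for the point of tangency of $S$ with $H_0$. Then $x_1^{(0)},x_2^{(0)},x_3^{(0)},x_4^{(0)}\neq0$.
   Context: Let $\Delta'(x_0,\ldots,x_4):=\prod_{i_1,\ldots,i_4\in\{0,1\}}\big(\sqrt{x_0}+(-1)^{i_1}\sqrt{x_1}+(-1)^{i_2}\sqrt{x_2}+(-1)^{i_3}\sqrt{x_3}+(-1)^{i_4}\sqrt{x_4}\big)\in\mathbb{Q}[x_0,\ldots,x_4]$ (degree $8$). $O$ is the double covering $\pi:O\to\mathbf{P}^4_{\mathbb{Q}}$ given by $w^2=(-3)\Delta'(x_0,\ldots,x_4)$; it splits over $S$ if $(-3)\Delta'$ restricted to $S$ is a square, i.e. $\pi^{-1}(S)\to S$ is a trivial double covering. $R$ is the locus $\Delta'=0$ and $H_i$ the hyperplane $x_i=0$. The three lines on $H_0\cap R$ are $\{(0:r:r:s:s)\}$, $\{(0:r:s:r:s)\}$, $\{(0:r:s:s:r)\}$, and analogously for the other $H_i$. $S$ is tangent to $H_i$ at $P$ if $T_PS\subset H_i$. *)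

theory Defs
  imports Complex_Main
begin

text \<open>Points of P^4 are represented by coordinate vectors x :: nat => complex,
  only the coordinates 0..4 being relevant; a vector represents a point iff it is
  nonzero in some coordinate j < 5.  All conditions below are homogeneous.\<close>

definition proj_pt :: "(nat \<Rightarrow> complex) \<Rightarrow> bool" where
  "proj_pt x \<longleftrightarrow> (\<exists>j<5. x j \<noteq> 0)"

text \<open>Evaluation of Delta'(x_0,...,x_4).  The product is invariant under the choice of
  square roots, so this is the evaluation of the polynomial Delta' in Q[x_0..x_4].\<close>

definition Delta' :: "(nat \<Rightarrow> complex) \<Rightarrow> complex" where
  "Delta' x = (\<Prod>i1\<in>{0,1::nat}. \<Prod>i2\<in>{0,1::nat}. \<Prod>i3\<in>{0,1::nat}. \<Prod>i4\<in>{0,1::nat}.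
       csqrt (x 0) + (-1) ^ i1 * csqrt (x 1) + (-1) ^ i2 * csqrt (x 2)
       + (-1) ^ i3 * csqrt (x 3) + (-1) ^ i4 * csqrt (x 4))"

text \<open>A quadric surface in P^4 over Q: the intersection of the hyperplane l.x = 0
  and the quadric x^T A x = 0, with rational l and symmetric rational A.\<close>

definition lin_form :: "(nat \<Rightarrow> rat) \<Rightarrow> (nat \<Rightarrow> complex) \<Rightarrow> complex" where
  "lin_form l x = (\<Sum>j<5. of_rat (l j) * x j)"

definition bil_form :: "(nat \<Rightarrow> nat \<Rightarrow> rat) \<Rightarrow> (nat \<Rightarrow> complex) \<Rightarrow> (nat \<Rightarrow> complex) \<Rightarrow> complex" where
  "bil_form A x y = (\<Sum>j<5. \<Sum>k<5. of_rat (A j k) * x j * y k)"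

definition on_surface :: "(nat \<Rightarrow> rat) \<Rightarrow> (nat \<Rightarrow> nat \<Rightarrow> rat) \<Rightarrow> (nat \<Rightarrow> complex) \<Rightarrow> bool" where
  "on_surface l A x \<longleftrightarrow> proj_pt x \<and> lin_form l x = 0 \<and> bil_form A x x = 0"

text \<open>Smooth quadric surface: l \<noteq> 0, A symmetric, and the quadratic form is
  nondegenerate on the 4-dimensional space l.x = 0 (equivalently, the Jacobian of
  (l, q) has rank 2 at every point of S).\<close>

definition smooth_quadric_surface :: "(nat \<Rightarrow> rat) \<Rightarrow> (nat \<Rightarrow> nat \<Rightarrow> rat) \<Rightarrow> bool" where
  "smooth_quadric_surface l A \<longleftrightarrow>
     (\<exists>j<5. l j \<noteq> 0) \<and> (\<forall>j<5. \<forall>k<5. A j k = A k j) \<and>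
     (\<forall>v. lin_form l v = 0 \<and> (\<forall>w. lin_form l w = 0 \<longrightarrow> bil_form A v w = 0)
          \<longrightarrow> (\<forall>j<5. v j = 0))"

definition tangent_space :: "(nat \<Rightarrow> rat) \<Rightarrow> (nat \<Rightarrow> nat \<Rightarrow> rat) \<Rightarrow> (nat \<Rightarrow> complex) \<Rightarrow> (nat \<Rightarrow> complex) set" where
  "tangent_space l A P = {v. lin_form l v = 0 \<and> bil_form A P v = 0}"

definition tangent_at :: "(nat \<Rightarrow> rat) \<Rightarrow> (nat \<Rightarrow> nat \<Rightarrow> rat) \<Rightarrow> nat \<Rightarrow> (nat \<Rightarrow> complex) \<Rightarrow> bool" where
  "tangent_at l A i P \<longleftrightarrow> on_surface l A P \<and> (\<forall>v\<in>tangent_space l A P. v i = 0)"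

text \<open>P lies on one of the three lines on H_i \<inter> R: x_i = 0 and the other four
  coordinates split into two pairs of equal coordinates.\<close>

definition on_R_line :: "nat \<Rightarrow> (nat \<Rightarrow> complex) \<Rightarrow> bool" where
  "on_R_line i P \<longleftrightarrow> P i = 0 \<and>
     (\<exists>a b c d. {a,b,c,d} = {0..4} - {i} \<and> card {a,b,c,d} = 4 \<and> P a = P b \<and> P c = P d)"

definition quartic_form :: "(nat \<Rightarrow> nat \<Rightarrow> nat \<Rightarrow> nat \<Rightarrow> rat) \<Rightarrow> (nat \<Rightarrow> complex) \<Rightarrow> complex" where
  "quartic_form T x = (\<Sum>j<5. \<Sum>k<5. \<Sum>m<5. \<Sum>n<5. of_rat (T j k m n) * x j * x k * x m * x n)"

text \<open>The double cover w^2 = (-3) Delta' splits over S: (-3) Delta' restricted to S is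
  the square of a quartic form over Q.\<close>

definition splits_over :: "(nat \<Rightarrow> rat) \<Rightarrow> (nat \<Rightarrow> nat \<Rightarrow> rat) \<Rightarrow> bool" where
  "splits_over l A \<longleftrightarrow> (\<exists>T. \<forall>x. on_surface l A x \<longrightarrow> -3 * Delta' x = (quartic_form T x)\<^sup>2)"

end

theory Submission
  imports Defs
begin

text \<open>At the tangency point \<open>P\<^sub>i\<close> the tangent plane \<open>{l = 0, A(P\<^sub>i, -) = 0}\<close>
  lies in \<open>H\<^sub>i\<close>, so the coordinate \<open>x\<^sub>i\<close> is a combination \<open>\<alpha>\<^sub>i l + \<beta>\<^sub>i A(P\<^sub>i, -)\<close>.
  Evaluated at \<open>P\<^sub>k\<close> this makes the matrix with columns \<open>\<beta>\<^sub>k P\<^sub>k\<close> symmetric, with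
  zero diagonal and columns in the hyperplane l, and each column consists of two pairs of
  equal entries since \<open>P\<^sub>k\<close> lies on a line of \<open>H\<^sub>k \<inter> R\<close>. Since three coordinate
  functionals never lie in a plane spanned by l and one further functional, no two columns
  are multiples of a third. These constraints force all \<open>\<beta>\<^sub>k \<noteq> 0\<close>, and if \<open>P\<^sub>0\<close> had a
  vanishing coordinate they force a line through two tangency points to lie on S and to
  contain a real point, with coordinates 0, 1, 0, 0, -1 in some order, where
  \<open>-3 \<Delta>' = -768\<close> is not the square of a real number.\<close>

lemma lin_form_combination:
  "lin_form l (\<lambda>j. u * x j + v * y j) = u * lin_form l x + v * lin_form l y"
  unfolding lin_form_def by (simp add: sum.distrib sum_distrib_left algebra_simps)

lemma bil_form_combination_left:
  "bil_form A (\<lambda>j. u * x j + v * y j) z = u * bil_form A x z + v * bil_form A y z"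
  unfolding bil_form_def by (simp add: sum.distrib sum_distrib_left algebra_simps)

lemma bil_form_combination_right:
  "bil_form A z (\<lambda>j. u * x j + v * y j) = u * bil_form A z x + v * bil_form A z y"
  unfolding bil_form_def by (simp add: sum.distrib sum_distrib_left algebra_simps)

lemma bil_form_scale_left: "bil_form A (\<lambda>j. u * x j) y = u * bil_form A x y"
  unfolding bil_form_def by (simp add: sum_distrib_left algebra_simps)

lemma bil_form_cong_left: "(\<And>j. j < 5 \<Longrightarrow> x j = x' j) \<Longrightarrow> bil_form A x y = bil_form A x' y"
  unfolding bil_form_def by (intro sum.cong refl) auto

lemma bil_form_commute:
  assumes "\<forall>j<5. \<forall>k<5. A j k = A k j"
  shows "bil_form A x y = bil_form A y x"
proof -
  have "bil_form A x y = (\<Sum>k<5. \<Sum>j<5. of_rat (A j k) * x j * y k)"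
    unfolding bil_form_def by (rule sum.swap)
  also have "\<dots> = bil_form A y x"
    unfolding bil_form_def by (intro sum.cong refl) (use assms in \<open>auto simp: algebra_simps\<close>)
  finally show ?thesis .
qed

definition coord_vec :: "nat \<Rightarrow> nat \<Rightarrow> complex" where
  "coord_vec j = (\<lambda>x. if x = j then 1 else 0)"

lemma coord_vec_apply: "coord_vec j x = (if x = j then 1 else 0)"
  unfolding coord_vec_def by simp

lemma lin_form_coord_vec: "j < 5 \<Longrightarrow> lin_form l (coord_vec j) = of_rat (l j)"
  unfolding lin_form_def coord_vec_def by (simp add: if_distrib cong: if_cong)

lemma functional_in_span2:
  fixes f g h :: "(nat \<Rightarrow> complex) \<Rightarrow> complex"
  assumes lin_f: "\<And>x y u v. f (\<lambda>i. u * x i + v * y i) = u * f x + v * f y"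
    and lin_g: "\<And>x y u v. g (\<lambda>i. u * x i + v * y i) = u * g x + v * g y"
    and lin_h: "\<And>x y u v. h (\<lambda>i. u * x i + v * y i) = u * h x + v * h y"
    and "f w \<noteq> 0"
    and kernel: "\<And>v. f v = 0 \<Longrightarrow> g v = 0 \<Longrightarrow> h v = 0"
  shows "\<exists>\<alpha> \<beta>. \<forall>v. h v = \<alpha> * f v + \<beta> * g v"
proof -
  define proj where "proj v = (\<lambda>i. 1 * v i + (- (f v / f w)) * w i)" for v
  have f_proj: "f (proj v) = 0" for v
    unfolding proj_def lin_f using \<open>f w \<noteq> 0\<close> by simp
  have h_proj: "h (proj v) = h v - (f v / f w) * h w" and g_proj: "g (proj v) = g v - (f v / f w) * g w" for v
    unfolding proj_def lin_h lin_g by simp_all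
  show ?thesis
  proof (cases "\<exists>z. f z = 0 \<and> g z \<noteq> 0")
    case True
    then obtain z where z: "f z = 0" "g z \<noteq> 0" by blast
    have h_kernel: "h (proj v) = (g (proj v) / g z) * h z" for v
    proof -
      define q where "q = (\<lambda>i. 1 * proj v i + (- (g (proj v) / g z)) * z i)"
      have "f q = 0" "g q = 0"
        unfolding q_def lin_f lin_g using f_proj z by simp_all
      then have "h q = 0" by (rule kernel)
      then show ?thesis unfolding q_def lin_h using z by (simp add: field_simps)
    qed
    have "h v = (h w / f w - g w * h z / (f w * g z)) * f v + (h z / g z) * g v" for v
    proof -
      have "h v = (f v / f w) * h w + (g v - (f v / f w) * g w) / g z * h z"
        using h_proj[of v] g_proj[of v] h_kernel[of v] by (simp add: algebra_simps)
      also have "\<dots> = (h w / f w - g w * h z / (f w * g z)) * f v + (h z / g z) * g v"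
        using \<open>f w \<noteq> 0\<close> z by (simp add: field_simps)
      finally show ?thesis .
    qed
    then show ?thesis by blast
  next
    case False
    then have "h (proj v) = 0" for v
      using f_proj kernel by blast
    then have "h v = (h w / f w) * f v + 0 * g v" for v
      using h_proj \<open>f w \<noteq> 0\<close> by (simp add: field_simps)
    then show ?thesis by blast
  qed
qed

lemma rank2_product_ne_identity3:
  fixes a1 a2 a3 b1 b2 b3 F1 F2 F3 G1 G2 G3 :: complex
  assumes "a1*F1+b1*G1 = 1" "a1*F2+b1*G2 = 0" "a1*F3+b1*G3 = 0"
    "a2*F1+b2*G1 = 0" "a2*F2+b2*G2 = 1" "a2*F3+b2*G3 = 0"
    "a3*F1+b3*G1 = 0" "a3*F2+b3*G2 = 0" "a3*F3+b3*G3 = 1"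
  shows False
proof -
  \<comment> \<open>the determinant of a product of a 3x2 and a 2x3 matrix vanishes\<close>
  have "(a1*F1+b1*G1)*((a2*F2+b2*G2)*(a3*F3+b3*G3) - (a2*F3+b2*G3)*(a3*F2+b3*G2))
      - (a1*F2+b1*G2)*((a2*F1+b2*G1)*(a3*F3+b3*G3) - (a2*F3+b2*G3)*(a3*F1+b3*G1))
      + (a1*F3+b1*G3)*((a2*F1+b2*G1)*(a3*F2+b3*G2) - (a2*F2+b2*G2)*(a3*F1+b3*G1)) = 0"
    by algebra
  then show False using assms by simp
qed

lemma eq_neg_if_mult_add_eq_0: "(x::'a::field) * r + y * r = 0 \<Longrightarrow> r \<noteq> 0 \<Longrightarrow> x = - y"
  by (simp add: distrib_right[symmetric] eq_neg_iff_add_eq_0)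

definition perm5 :: "nat \<Rightarrow> nat \<Rightarrow> nat \<Rightarrow> nat \<Rightarrow> nat \<Rightarrow> bool" where
  "perm5 i a b c d \<longleftrightarrow> distinct [i, a, b, c, d] \<and> {i, a, b, c, d} = {..<5}"

lemma perm5_less: "perm5 i a b c d \<Longrightarrow> i < 5 \<and> a < 5 \<and> b < 5 \<and> c < 5 \<and> d < 5"
  unfolding perm5_def by auto

lemma perm5_cases: "perm5 i a b c d \<Longrightarrow> x < 5 \<Longrightarrow> x = i \<or> x = a \<or> x = b \<or> x = c \<or> x = d"
  unfolding perm5_def by auto

lemma ex_less5_perm5:
  "perm5 i a b c d \<Longrightarrow> (\<exists>x<5. Q x) \<longleftrightarrow> Q i \<or> Q a \<or> Q b \<or> Q c \<or> Q d"
  using perm5_cases perm5_less by blast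

lemma all_less5_perm5:
  "perm5 i a b c d \<Longrightarrow> (\<forall>x<5. Q x) \<longleftrightarrow> Q i \<and> Q a \<and> Q b \<and> Q c \<and> Q d"
  using perm5_cases perm5_less by blast

lemma perm5_swap:
  "perm5 i a b c d \<Longrightarrow> perm5 i b a c d"
  "perm5 i a b c d \<Longrightarrow> perm5 i a c b d"
  "perm5 i a b c d \<Longrightarrow> perm5 i a b d c"
  "perm5 i a b c d \<Longrightarrow> perm5 a i b c d"
  unfolding perm5_def by auto

lemma perm5_others: "perm5 i a b c d \<Longrightarrow> {a, b, c, d} = {..<5} - {i}"
  unfolding perm5_def by (metis Diff_insert_absorb distinct.simps(2) list.set(2) set_empty)

lemma perm5_exists: "i < 5 \<Longrightarrow> \<exists>a b c d. perm5 i a b c d"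
proof -
  have "{..<5::nat} = {0, 1, 2, 3, 4}" by auto
  then have "perm5 0 1 2 3 4" "perm5 1 0 2 3 4" "perm5 2 0 1 3 4" "perm5 3 0 1 2 4" "perm5 4 0 1 2 3"
    unfolding perm5_def by auto
  moreover assume "i < 5"
  then have "i = 0 \<or> i = 1 \<or> i = 2 \<or> i = 3 \<or> i = 4" by auto
  ultimately show ?thesis by blast
qed

lemma sum_perm5: "perm5 i a b c d \<Longrightarrow> (\<Sum>j<5. f j) = f i + f a + f b + f c + f d"
proof -
  assume "perm5 i a b c d"
  then have "{..<5} = {i, a, b, c, d}" "distinct [i, a, b, c, d]" unfolding perm5_def by auto
  then show ?thesis by (simp add: add.assoc)
qed

definition equal_in_pairs :: "(nat \<Rightarrow> 'a) \<Rightarrow> nat \<Rightarrow> nat \<Rightarrow> nat \<Rightarrow> nat \<Rightarrow> bool" where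
  "equal_in_pairs x a b c d \<longleftrightarrow>
     (x a = x b \<and> x c = x d) \<or> (x a = x c \<and> x b = x d) \<or> (x a = x d \<and> x b = x c)"

lemma equal_in_pairs_swap:
  "equal_in_pairs x a b c d = equal_in_pairs x b a c d"
  "equal_in_pairs x a b c d = equal_in_pairs x a c b d"
  "equal_in_pairs x a b c d = equal_in_pairs x a b d c"
  unfolding equal_in_pairs_def by auto

lemma equal_in_pairs_perm:
  assumes "equal_in_pairs x a b c d" "perm5 i a b c d" "perm5 i a' b' c' d'"
  shows "equal_in_pairs x a' b' c' d'"
proof -
  have "{a', b', c', d'} = {a, b, c, d}"
    using assms(2,3) by (simp add: perm5_others)
  moreover have "distinct [a, b, c, d]" "distinct [a', b', c', d']"
    using assms(2,3) unfolding perm5_def by simp_all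
  ultimately have "a' = a \<or> a' = b \<or> a' = c \<or> a' = d" "b' = a \<or> b' = b \<or> b' = c \<or> b' = d"
     "c' = a \<or> c' = b \<or> c' = c \<or> c' = d" "d' = a \<or> d' = b \<or> d' = c \<or> d' = d"
    by blast+
  then show ?thesis
    using assms(1) \<open>distinct [a, b, c, d]\<close> \<open>distinct [a', b', c', d']\<close>
    by (elim disjE; simp only: distinct.simps list.set insert_iff empty_iff;
        metis equal_in_pairs_swap)
qed

lemma perm5_if_complement:
  assumes "i < 5" "{a, b, c, d} = {0..4} - {i}" "card {a, b, c, d} = 4"
  shows "perm5 i a b c d"
proof -
  have "{i, a, b, c, d} = insert i ({0..4} - {i})" using assms(2) by simp
  also have "\<dots> = {..<5}" using assms(1) by auto
  finally have "{i, a, b, c, d} = {..<5}" .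
  moreover have "distinct [a, b, c, d]"
    using assms(3) by (auto simp: card_insert_if split: if_splits)
  moreover have "i \<notin> {a, b, c, d}" using assms(2) by blast
  ultimately show ?thesis unfolding perm5_def by simp
qed

lemma on_R_line_equal_in_pairs:
  assumes "on_R_line i Q" "perm5 i a b c d"
  shows "equal_in_pairs Q a b c d"
proof -
  obtain a' b' c' d' where "{a', b', c', d'} = {0..4} - {i}" "card {a', b', c', d'} = 4"
    and "Q a' = Q b'" "Q c' = Q d'"
    using assms(1) unfolding on_R_line_def by blast
  moreover have "i < 5" using assms(2) perm5_less by blast
  ultimately have "equal_in_pairs Q a' b' c' d'" "perm5 i a' b' c' d'"
    unfolding equal_in_pairs_def by (simp_all add: perm5_if_complement)
  then show ?thesis
    using assms(2) equal_in_pairs_perm by blast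
qed

lemma on_R_line_zero_coordinate:
  assumes "on_R_line 0 Q" "Q 1 = 0 \<or> Q 2 = 0 \<or> Q 3 = 0 \<or> Q 4 = 0"
  shows "\<exists>a b c d. perm5 0 a b c d \<and> Q a = Q b \<and> Q c = 0 \<and> Q d = 0"
proof -
  obtain a b c d where abcd: "{a, b, c, d} = {0..4} - {0}" "card {a, b, c, d} = 4"
    and "Q a = Q b" "Q c = Q d"
    using assms(1) unfolding on_R_line_def by blast
  then have "perm5 0 a b c d" "perm5 0 c d a b"
    by (simp_all add: perm5_if_complement insert_commute)
  moreover have "\<exists>j\<in>{0..4} - {0}. Q j = 0"
    using assms(2) by force
  then obtain j where "j \<in> {a, b, c, d}" "Q j = 0"
    using abcd(1) by blast
  ultimately show ?thesis
  proof (cases "j \<in> {a, b}")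
    case True
    then have "Q a = 0" "Q b = 0" using \<open>Q a = Q b\<close> \<open>Q j = 0\<close> by auto
    then show ?thesis using \<open>perm5 0 c d a b\<close> \<open>Q c = Q d\<close> by blast
  next
    case False
    then have "Q c = 0" "Q d = 0" using \<open>j \<in> {a, b, c, d}\<close> \<open>Q c = Q d\<close> \<open>Q j = 0\<close> by auto
    then show ?thesis using \<open>perm5 0 a b c d\<close> \<open>Q a = Q b\<close> by blast
  qed
qed

lemma of_rat_in_Reals: "(of_rat q :: complex) \<in> \<real>"
  by (cases q) (simp add: of_rat_rat)

lemma quartic_form_in_Reals: "(\<forall>j<5. y j \<in> \<real>) \<Longrightarrow> quartic_form T y \<in> \<real>"
  unfolding quartic_form_def by (intro sum_in_Reals Reals_mult) (auto simp: of_rat_in_Reals)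

lemma splits_over_Delta'_ne_256:
  assumes "splits_over l A" "on_surface l A y" "\<forall>j<5. y j \<in> \<real>"
  shows "Delta' y \<noteq> 256"
proof
  assume "Delta' y = 256"
  obtain T where "-3 * Delta' y = (quartic_form T y)\<^sup>2"
    using assms(1,2) unfolding splits_over_def by blast
  moreover obtain g where "quartic_form T y = of_real g"
    using quartic_form_in_Reals[OF assms(3)] Reals_cases by blast
  ultimately have "complex_of_real (-768) = of_real (g\<^sup>2)"
    using \<open>Delta' y = 256\<close> by simp
  then have "-768 = g\<^sup>2" using of_real_eq_iff by blast
  then show False by (smt (verit) zero_le_power2)
qed

lemma Delta'_unit_pair:
  assumes "perm5 0 a b c d" "y 0 = 0" "y a = 1" "y b = 0" "y c = 0" "y d = -1"
  shows "Delta' y = 256"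
proof -
  have abcd: "{a, b, c, d} = {..<5} - {0}" using perm5_others[OF assms(1)] .
  have one_four: "{1..4} = {..<5::nat} - {0}" by auto
  have "a \<in> {1..4}" "d \<in> {1..4}" unfolding one_four abcd[symmetric] by simp_all
  then have "a = 1 \<or> a = 2 \<or> a = 3 \<or> a = 4" "d = 1 \<or> d = 2 \<or> d = 3 \<or> d = 4" by auto
  moreover have "a \<noteq> d" using assms(1) unfolding perm5_def by simp
  moreover have "\<forall>k\<in>{1..4} - {a, d}. y k = 0"
    unfolding one_four abcd[symmetric] using assms(4,5) by auto
  \<comment> \<open>as csqrt (-1) = i, each of the 16 factors is \<open>\<plusminus>1 \<plusminus> i\<close>, and
     \<open>((1 + i)(1 - i)(-1 + i)(-1 - i))\<^sup>4 = 4\<^sup>4\<close>\<close>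
  ultimately show ?thesis
    using assms(2,3,6) unfolding Delta'_def
    by (elim disjE) (simp_all add: power2_eq_square algebra_simps)
qed

lemma tangent_coordinate_decomposition:
  assumes "smooth_quadric_surface l A" "tangent_at l A i P"
  shows "\<exists>\<alpha> \<beta>. \<forall>v. v i = \<alpha> * lin_form l v + \<beta> * bil_form A P v"
proof -
  obtain j where "j < 5" "l j \<noteq> 0"
    using assms(1) unfolding smooth_quadric_surface_def by blast
  show ?thesis
  proof (rule functional_in_span2[where w = "coord_vec j"])
    show "lin_form l (coord_vec j) \<noteq> 0"
      using \<open>j < 5\<close> \<open>l j \<noteq> 0\<close> by (simp add: lin_form_coord_vec)
    show "v i = 0" if "lin_form l v = 0" "bil_form A P v = 0" for v
      using assms(2) that unfolding tangent_at_def tangent_space_def by blast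
  qed (simp_all add: lin_form_combination bil_form_combination_right)
qed

locale tangency_data =
  fixes l :: "nat \<Rightarrow> rat" and A :: "nat \<Rightarrow> nat \<Rightarrow> rat"
    and P :: "nat \<Rightarrow> nat \<Rightarrow> complex" and \<alpha> \<beta> :: "nat \<Rightarrow> complex"
  assumes smooth: "smooth_quadric_surface l A"
    and tangent: "i < 5 \<Longrightarrow> tangent_at l A i (P i)"
    and on_line: "i < 5 \<Longrightarrow> on_R_line i (P i)"
    and decomposition: "i < 5 \<Longrightarrow> v i = \<alpha> i * lin_form l v + \<beta> i * bil_form A (P i) v"
begin

abbreviation L :: "nat \<Rightarrow> complex" where
  "L j \<equiv> of_rat (l j)"

lemma A_sym: "\<forall>j<5. \<forall>k<5. A j k = A k j"
  using smooth unfolding smooth_quadric_surface_def by blast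

lemma l_nonzero: "\<exists>j<5. l j \<noteq> 0"
  using smooth unfolding smooth_quadric_surface_def by blast

lemma P_on_surface: "i < 5 \<Longrightarrow> on_surface l A (P i)"
  using tangent unfolding tangent_at_def by blast

lemma P_lin_form: "i < 5 \<Longrightarrow> lin_form l (P i) = 0"
  and P_bil_form: "i < 5 \<Longrightarrow> bil_form A (P i) (P i) = 0"
  and P_proj_pt: "i < 5 \<Longrightarrow> proj_pt (P i)"
  using P_on_surface unfolding on_surface_def by blast+

lemma P_diag: "i < 5 \<Longrightarrow> P i i = 0"
  using on_line unfolding on_R_line_def by blast

definition B :: "nat \<Rightarrow> nat \<Rightarrow> complex" where
  "B x k = \<beta> k * P k x"

lemma B_gram: "j < 5 \<Longrightarrow> k < 5 \<Longrightarrow> B j k = \<beta> j * \<beta> k * bil_form A (P j) (P k)"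
  unfolding B_def using decomposition[of j "P k"] P_lin_form[of k] by simp

lemma B_sym: "j < 5 \<Longrightarrow> k < 5 \<Longrightarrow> B j k = B k j"
  using B_gram bil_form_commute[OF A_sym] by (simp add: mult.commute)

lemma B_diag: "k < 5 \<Longrightarrow> B k k = 0"
  unfolding B_def by (simp add: P_diag)

lemma B_column_relation:
  assumes "k < 5"
  shows "(\<Sum>j<5. L j * B j k) = 0"
proof -
  have "(\<Sum>j<5. L j * B j k) = \<beta> k * lin_form l (P k)"
    unfolding B_def lin_form_def by (simp add: sum_distrib_left algebra_simps)
  then show ?thesis using P_lin_form[OF assms] by simp
qed

lemma B_column_pairs:
  assumes "perm5 k a b c d"
  shows "equal_in_pairs (\<lambda>x. B x k) a b c d"
proof -
  have "k < 5" using perm5_less[OF assms] by blast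
  then have "equal_in_pairs (P k) a b c d"
    using on_R_line_equal_in_pairs[OF on_line assms] by blast
  then show ?thesis unfolding B_def equal_in_pairs_def by auto
qed

lemma B_column_nonzero: "k < 5 \<Longrightarrow> \<beta> k \<noteq> 0 \<Longrightarrow> \<exists>x<5. B x k \<noteq> 0"
  using P_proj_pt unfolding proj_pt_def B_def by auto

lemma coordinate_by_column: "t < 5 \<Longrightarrow> v t = \<alpha> t * lin_form l v + bil_form A (\<lambda>x. B x t) v"
  unfolding B_def bil_form_scale_left using decomposition by simp

text \<open>If two columns were multiples of a third, three coordinate functionals would lie in the
  span of \<open>lin_form l\<close> and a single bilinear functional.\<close>

lemma no_two_columns_proportional:
  assumes "j < 5" "k < 5" "t < 5" "j \<noteq> k" "j \<noteq> t" "k \<noteq> t"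
    and "\<forall>x<5. B x j = \<mu> * B x k" "\<forall>x<5. B x t = \<nu> * B x k"
  shows False
proof -
  define g where "g = bil_form A (\<lambda>x. B x k)"
  have "bil_form A (\<lambda>x. B x j) = (\<lambda>v. \<mu> * g v)" "bil_form A (\<lambda>x. B x t) = (\<lambda>v. \<nu> * g v)"
    unfolding g_def using assms(7,8)
    by (auto simp: bil_form_scale_left[symmetric] intro!: bil_form_cong_left)
  then have coords: "v j = \<alpha> j * lin_form l v + \<mu> * g v" "v k = \<alpha> k * lin_form l v + 1 * g v"
    "v t = \<alpha> t * lin_form l v + \<nu> * g v" for v
    using coordinate_by_column[OF assms(1), of v] coordinate_by_column[OF assms(2), of v]
      coordinate_by_column[OF assms(3), of v]
    unfolding g_def by simp_all
  show False
    by (rule rank2_product_ne_identity3[of "\<alpha> j" "lin_form l (coord_vec j)" \<mu> "g (coord_vec j)"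
          "lin_form l (coord_vec k)" "g (coord_vec k)" "lin_form l (coord_vec t)" "g (coord_vec t)"
          "\<alpha> k" 1 "\<alpha> t" \<nu>])
      (use coords[of "coord_vec j"] coords[of "coord_vec k"] coords[of "coord_vec t"] assms(4-6)
        in \<open>simp_all add: coord_vec_apply\<close>)
qed

lemma line_on_surface:
  assumes "j < 5" "k < 5" "B j k = 0" "proj_pt (\<lambda>x. u * B x j + v * B x k)"
  shows "on_surface l A (\<lambda>x. u * B x j + v * B x k)"
proof -
  define y where "y = (\<lambda>x. (u * \<beta> j) * P j x + (v * \<beta> k) * P k x)"
  have y_eq: "(\<lambda>x. u * B x j + v * B x k) = y"
    unfolding y_def B_def by (simp add: algebra_simps)
  have "lin_form l y = 0"
    unfolding y_def lin_form_combination using P_lin_form assms(1,2) by simp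
  moreover have "bil_form A y y = 2 * u * v * B j k"
    unfolding y_def bil_form_combination_left bil_form_combination_right B_gram[OF assms(1,2)]
    using P_bil_form assms(1,2) bil_form_commute[OF A_sym, of "P k" "P j"] by (simp add: algebra_simps)
  ultimately show ?thesis
    using assms(3,4) unfolding y_eq on_surface_def by simp
qed

lemma \<beta>_vanishes_at_most_once:
  assumes "i < 5" "k < 5" "k \<noteq> i" "\<beta> i = 0"
  shows "\<beta> k \<noteq> 0"
proof
  assume "\<beta> k = 0"
  have coord_i: "v i = \<alpha> i * lin_form l v" for v
    using decomposition[OF assms(1)] assms(4) by simp
  have "\<alpha> i \<noteq> 0" using coord_i[of "coord_vec i"] by (auto simp: coord_vec_apply)
  moreover have "0 = \<alpha> i * of_rat (l k)"
    using coord_i[of "coord_vec k"] assms(2,3) by (simp add: coord_vec_apply lin_form_coord_vec)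
  moreover have "1 = \<alpha> k * of_rat (l k)"
    using decomposition[OF assms(2), of "coord_vec k"] \<open>\<beta> k = 0\<close> assms(2)
    by (simp add: coord_vec_apply lin_form_coord_vec)
  ultimately show False by simp
qed

lemma B_nonzero_off_zero_column:
  assumes "\<beta> i = 0" "perm5 i a b c d"
  shows "B a b \<noteq> 0"
proof
  assume "B a b = 0"
  have lt: "i < 5" "a < 5" "b < 5" "c < 5" "d < 5" using perm5_less[OF assms(2)] by auto
  have dist: "distinct [i, a, b, c, d]" using assms(2) unfolding perm5_def by simp
  have col_i: "B x i = 0" for x unfolding B_def using assms(1) by simp
  have zero: "B i a = 0" "B i b = 0" "B i c = 0" "B a a = 0" "B b b = 0" "B b a = 0"
    using col_i B_sym B_diag lt \<open>B a b = 0\<close> by metis+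
  have sym: "B c a = B a c" "B d a = B a d" "B c b = B b c" "B d b = B b d"
    using B_sym lt by auto
  have support: "B i k \<noteq> 0 \<or> B a k \<noteq> 0 \<or> B b k \<noteq> 0 \<or> B c k \<noteq> 0 \<or> B d k \<noteq> 0"
    if "k < 5" "k \<noteq> i" for k
    using B_column_nonzero \<beta>_vanishes_at_most_once assms(1) lt(1) that
      ex_less5_perm5[OF assms(2), of "\<lambda>x. B x k \<noteq> 0"] by blast
  have "perm5 a i b c d" "perm5 b i a c d" "perm5 c i a b d"
    using assms(2) perm5_swap(4) perm5_swap(4)[OF perm5_swap(1)]
      perm5_swap(4)[OF perm5_swap(1)[OF perm5_swap(2)]] by blast+
  note pairs = this[THEN B_column_pairs, unfolded equal_in_pairs_def]
  have "B a c = B a d" "B a c \<noteq> 0"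
    using pairs(1) support[of a] zero sym lt dist by auto
  moreover have "B b c = B b d" "B b c \<noteq> 0"
    using pairs(2) support[of b] zero sym lt dist \<open>B a b = 0\<close> by auto
  moreover have "B a c = B b c"
    using pairs(3) calculation zero sym by auto
  ultimately have "\<forall>x<5. B x a = 1 * B x b"
    using all_less5_perm5[OF assms(2)] zero sym \<open>B a b = 0\<close> by simp
  moreover have "\<forall>x<5. B x i = 0 * B x b" using col_i by simp
  ultimately show False
    using no_two_columns_proportional[of a b i] lt dist by auto
qed

lemma \<beta>_nonzero:
  assumes "i < 5"
  shows "\<beta> i \<noteq> 0"
proof
  assume "\<beta> i = 0"
  obtain a b c d where abcd: "perm5 i a b c d" using perm5_exists[OF assms] by blast
  then have "B a b \<noteq> 0" "B a c \<noteq> 0" "B a d \<noteq> 0"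
    using B_nonzero_off_zero_column[OF \<open>\<beta> i = 0\<close>] perm5_swap(2) perm5_swap(2)[OF perm5_swap(3)]
    by blast+
  moreover have "a < 5" using perm5_less[OF abcd] by blast
  moreover have "B i a = 0"
    using B_sym[OF assms \<open>a < 5\<close>] \<open>\<beta> i = 0\<close> unfolding B_def by simp
  moreover have "equal_in_pairs (\<lambda>x. B x a) i b c d"
    using B_column_pairs perm5_swap(4)[OF abcd] by blast
  ultimately show False
    using B_sym perm5_less[OF abcd] unfolding equal_in_pairs_def by metis
qed

lemma B_column_relation_perm5:
  "perm5 i a b c d \<Longrightarrow> k < 5 \<Longrightarrow> L i * B i k + L a * B a k + L b * B b k + L c * B c k + L d * B d k = 0"
  using B_column_relation[of k] sum_perm5[of i a b c d "\<lambda>j. L j * B j k"] by simp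

lemma L_nonzero_perm5: "perm5 i a b c d \<Longrightarrow> L i \<noteq> 0 \<or> L a \<noteq> 0 \<or> L b \<noteq> 0 \<or> L c \<noteq> 0 \<or> L d \<noteq> 0"
  using l_nonzero ex_less5_perm5[of i a b c d "\<lambda>j. l j \<noteq> 0"] by simp

end

locale degenerate_tangency = tangency_data +
  fixes a b c d :: nat
  assumes indices: "perm5 0 a b c d"
    and first_point: "P 0 a = P 0 b" "P 0 c = 0" "P 0 d = 0"
begin

lemma indices_less: "a < 5" "b < 5" "c < 5" "d < 5"
  using perm5_less[OF indices] by auto

lemma indices_distinct: "distinct [0, a, b, c, d]"
  using indices unfolding perm5_def by simp

lemma indices_perms: "perm5 a 0 b c d" "perm5 b 0 a c d" "perm5 c 0 a b d" "perm5 d 0 a b c"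
  using perm5_swap(4)[OF indices] perm5_swap(4)[OF perm5_swap(1)[OF indices]]
    perm5_swap(4)[OF perm5_swap(1)[OF perm5_swap(2)[OF indices]]]
    perm5_swap(4)[OF perm5_swap(1)[OF perm5_swap(2)[OF perm5_swap(3)[OF indices]]]]
  by blast+

lemma B_sym_indices:
  "B a 0 = B 0 a" "B b 0 = B 0 b" "B c 0 = B 0 c" "B d 0 = B 0 d"
  "B b a = B a b" "B c a = B a c" "B d a = B a d" "B c b = B b c" "B d b = B b d" "B d c = B c d"
  using B_sym indices_less by auto

lemma B_diag_indices: "B 0 0 = 0" "B a a = 0" "B b b = 0" "B c c = 0" "B d d = 0"
  using B_diag indices_less by auto

lemma first_row: "B 0 a = B 0 b" "B 0 c = 0" "B 0 d = 0"
proof -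
  have "B 0 x = \<beta> 0 * P 0 x" if "x < 5" for x
    using B_sym[of 0 x] that unfolding B_def by simp
  then show "B 0 a = B 0 b" "B 0 c = 0" "B 0 d = 0"
    using first_point indices_less by simp_all
qed

lemma first_row_nonzero: "B 0 a \<noteq> 0"
proof -
  have "\<exists>x<5. B x 0 \<noteq> 0" using B_column_nonzero \<beta>_nonzero by simp
  then show ?thesis
    unfolding ex_less5_perm5[OF indices] using first_row B_sym_indices B_diag_indices by auto
qed

lemmas B_simps = B_sym_indices B_diag_indices first_row

lemmas column_relation = B_column_relation_perm5[OF indices]

lemma B_cd_nonzero: "B c d \<noteq> 0"
proof
  assume "B c d = 0"
  note pairs = indices_perms[THEN B_column_pairs, unfolded equal_in_pairs_def]
  have "B a c = B b c" "B a d = B b d"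
    using pairs(3,4) \<open>B c d = 0\<close> by (auto simp: B_simps)
  then have "\<forall>x<5. B x c = (B a c / B 0 a) * B x 0" "\<forall>x<5. B x d = (B a d / B 0 a) * B x 0"
    using first_row_nonzero \<open>B c d = 0\<close> by (simp_all add: all_less5_perm5[OF indices] B_simps)
  then show False
    by (rule no_two_columns_proportional[rotated 6]) (use indices_less indices_distinct in auto)
qed

lemma B_ad_zero_if_B_ac_zero:
  assumes "B a c = 0"
  shows "B a d = 0"
proof (rule ccontr)
  assume "B a d \<noteq> 0"
  define r g where "r = B 0 a" and "g = B c d"
  have "r \<noteq> 0" "g \<noteq> 0" using first_row_nonzero B_cd_nonzero unfolding r_def g_def by auto
  note pairs = indices_perms[THEN B_column_pairs, unfolded equal_in_pairs_def]
  have "B b c = g" using pairs(3) assms \<open>g \<noteq> 0\<close> unfolding g_def by (auto simp: B_simps)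
  moreover have "B b d = 0" "B a d = g"
    using pairs(4) \<open>B a d \<noteq> 0\<close> \<open>g \<noteq> 0\<close> unfolding g_def by (auto simp: B_simps)
  moreover have "B a b = 0" "r = g"
    using pairs(1) assms \<open>B a d \<noteq> 0\<close> \<open>r \<noteq> 0\<close> calculation unfolding r_def by (auto simp: B_simps)
  ultimately have "L a * r + L b * r = 0" "L 0 * r + L d * r = 0" "L 0 * r + L c * r = 0"
    "L b * g + L d * g = 0" "L a * g + L c * g = 0"
    using column_relation[OF zero_less_numeral] column_relation[OF indices_less(1)]
      column_relation[OF indices_less(2)] column_relation[OF indices_less(3)]
      column_relation[OF indices_less(4)] assms
    unfolding r_def g_def by (simp_all add: B_simps)
  then have "L a = - L b" "L 0 = - L d" "L 0 = - L c" "L b = - L d" "L a = - L c"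
    using \<open>r \<noteq> 0\<close> \<open>g \<noteq> 0\<close> eq_neg_if_mult_add_eq_0 by blast+
  then show False using L_nonzero_perm5[OF indices] by auto
qed

lemma real_point_Delta'_256_if_B_ac_zero:
  assumes "B a c = 0"
  shows "\<exists>y. on_surface l A y \<and> (\<forall>j<5. y j \<in> \<real>) \<and> Delta' y = 256"
proof -
  define r g where "r = B 0 a" and "g = B c d"
  have "r \<noteq> 0" "g \<noteq> 0" using first_row_nonzero B_cd_nonzero unfolding r_def g_def by auto
  note pairs = indices_perms[THEN B_column_pairs, unfolded equal_in_pairs_def]
  have "B a d = 0" using B_ad_zero_if_B_ac_zero[OF assms] .
  moreover have "B b c = g" using pairs(3) assms \<open>g \<noteq> 0\<close> unfolding g_def by (auto simp: B_simps)
  moreover have "B b d = g" using pairs(4) \<open>B a d = 0\<close> \<open>g \<noteq> 0\<close> unfolding g_def by (auto simp: B_simps)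
  moreover have "B a b = r"
    using pairs(1) assms \<open>B a d = 0\<close> \<open>r \<noteq> 0\<close> unfolding r_def by (auto simp: B_simps)
  ultimately have rel: "L a * r + L b * r = 0" "L 0 * r + L b * r = 0" "L d * g + L b * g = 0"
    "L c * g + L b * g = 0" "L 0 * r + L a * r + L c * g + L d * g = 0"
    using column_relation[OF zero_less_numeral] column_relation[OF indices_less(1)]
      column_relation[OF indices_less(2)] column_relation[OF indices_less(3)]
      column_relation[OF indices_less(4)] assms
    unfolding r_def g_def by (simp_all add: B_simps ac_simps)
  then have "L a = - L b" "L 0 = - L b" "L d = - L b" "L c = - L b"
    using \<open>r \<noteq> 0\<close> \<open>g \<noteq> 0\<close> eq_neg_if_mult_add_eq_0 by blast+
  then have "L b \<noteq> 0" using L_nonzero_perm5[OF indices] by auto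
  moreover have "2 * L b * (r + g) = 0"
  proof -
    have "2 * L b * (r + g) = (L a * r + L b * r) + (L 0 * r + L b * r) + (L d * g + L b * g)
        + (L c * g + L b * g) - (L 0 * r + L a * r + L c * g + L d * g)"
      by (simp add: algebra_simps)
    then show ?thesis using rel by simp
  qed
  ultimately have "g = - r" by (simp add: eq_neg_iff_add_eq_0 add.commute)
  have col0: "B 0 0 = 0" "B a 0 = r" "B b 0 = r" "B c 0 = 0" "B d 0 = 0"
    unfolding r_def by (simp_all add: B_simps)
  have colc: "B 0 c = 0" "B a c = 0" "B b c = - r" "B c c = 0" "B d c = - r"
    using assms \<open>B b c = g\<close> \<open>g = - r\<close> unfolding g_def by (simp_all add: B_simps)
  \<comment> \<open>y lies on the line through \<open>P\<^sub>0\<close> and \<open>P\<^sub>c\<close>, which is contained in S as \<open>A(P\<^sub>0, P\<^sub>c) = 0\<close>\<close>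
  define y where "y = (\<lambda>x. inverse r * B x 0 + inverse r * B x c)"
  have y: "y 0 = 0" "y a = 1" "y b = 0" "y c = 0" "y d = -1"
    unfolding y_def col0 colc using \<open>r \<noteq> 0\<close> by simp_all
  then have "proj_pt y" unfolding proj_pt_def using indices_less(1) by force
  then have "on_surface l A y"
    unfolding y_def using line_on_surface[of 0 c] indices_less first_row by simp
  moreover have "\<forall>j<5. y j \<in> \<real>" using y by (simp add: all_less5_perm5[OF indices])
  moreover have "Delta' y = 256" using Delta'_unit_pair[OF indices y] .
  ultimately show ?thesis by blast
qed

lemma real_point_Delta'_256: "\<exists>y. on_surface l A y \<and> (\<forall>j<5. y j \<in> \<real>) \<and> Delta' y = 256"
proof -
  have "B a c = 0 \<or> B b c = 0"
    using B_column_pairs[OF indices_perms(3)] B_cd_nonzero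
    unfolding equal_in_pairs_def by (auto simp: B_simps)
  moreover have "degenerate_tangency l A P \<alpha> \<beta> b a c d"
  proof (rule degenerate_tangency.intro[OF tangency_data_axioms], unfold_locales)
    show "perm5 0 b a c d" using perm5_swap(1)[OF indices] .
  qed (use first_point in auto)
  ultimately show ?thesis
    using real_point_Delta'_256_if_B_ac_zero degenerate_tangency.real_point_Delta'_256_if_B_ac_zero
    by blast
qed

end

theorem mainTheorem16:
  fixes l :: "nat \<Rightarrow> rat" and A :: "nat \<Rightarrow> nat \<Rightarrow> rat"
  assumes "smooth_quadric_surface l A"
    and "splits_over l A"
    and "\<forall>i<5. \<exists>P. tangent_at l A i P"
    and "\<forall>i<5. \<forall>P. tangent_at l A i P \<longrightarrow> on_R_line i P"
  shows "\<forall>P. tangent_at l A 0 P \<longrightarrow> P 1 \<noteq> 0 \<and> P 2 \<noteq> 0 \<and> P 3 \<noteq> 0 \<and> P 4 \<noteq> 0"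
proof (intro allI impI)
  fix P0 assume "tangent_at l A 0 P0"
  obtain Q where "\<forall>i<5. tangent_at l A i (Q i)" using assms(3) by metis
  define P where "P = Q(0 := P0)"
  have tangent: "tangent_at l A i (P i)" if "i < 5" for i
    using \<open>tangent_at l A 0 P0\<close> \<open>\<forall>i<5. tangent_at l A i (Q i)\<close> that unfolding P_def by simp
  obtain \<alpha> \<beta> where "\<forall>i<5. \<forall>v. v i = \<alpha> i * lin_form l v + \<beta> i * bil_form A (P i) v"
    using tangent_coordinate_decomposition[OF assms(1) tangent] by metis
  then interpret tangency_data l A P \<alpha> \<beta>
    by unfold_locales (use assms(1,4) tangent in auto)
  show "P0 1 \<noteq> 0 \<and> P0 2 \<noteq> 0 \<and> P0 3 \<noteq> 0 \<and> P0 4 \<noteq> 0"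
  proof (rule ccontr)
    assume "\<not> ?thesis"
    then obtain a b c d where "perm5 0 a b c d" "P 0 a = P 0 b" "P 0 c = 0" "P 0 d = 0"
      using on_R_line_zero_coordinate[OF on_line[of 0]] unfolding P_def by auto
    then interpret degenerate_tangency l A P \<alpha> \<beta> a b c d
      by unfold_locales
    show False
      using real_point_Delta'_256 splits_over_Delta'_ne_256[OF assms(2)] by blast
  qed
qed

end
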